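(* For a pair of adapted processes $V=(V_t)_{t\in\mathbb{T}}$, $S=(S_t)_{t\in\mathbb{T}\cup\{T\}}$, properties (i)–(iii) hold jointly if and only if properties (i')–(iii') hold jointly, where: (i) $0<S_t\le1$ on $D_t$ and $S_t=0$ on $D_t^c$ for all $t\in\mathbb{T}$, and $V_t=G_t$ on $\{t\ge T_e\}$; (ii) given $S$, $V$ is the smallest adapted process which dominates $G$ and renders $(S_{t\wedge T_e}V_{t\wedge T_e})_{t\in\mathbb{T}}$ a supermartingale; (iii) given $V$, $S$ is the smallest nonnegative supermartingale on $\mathbb{T}\cup\{T\}$ satisfying $S_t=1$ on $D_t\cap\{V_t=G_t\}$ for all $t\in\mathbb{T}$, and $S_\infty=1_{\{\sigma=\infty\}}$ if $T=\infty$; (i') $S_t>0$ on $D_t$ for all $t\in\mathbb{T}$ and $V_t=G_t$ on $\{t\ge T_e\}$; (ii') $(S_{t\wedge T_e}V_{t\wedge T_e})_{t\in\mathbb{T}}$ is the Snell envelope of $(S_{t\wedge T_e}G_{t\wedge T_e})_{t\in\mathbb{T}}$; (iii') $S$ is the Snell envelope on $\mathbb{T}\cup\{T\}$ of the process $1_{\{t<\infty\}\cap\{V_t=G_t\}\cap D_t}+1_{\{t=\sigma=\infty\}}$.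
   Context: Let $T\in\mathbb{N}\cup\{\infty\}$, $\mathbb{T}=\{0,\dots,T\}$ if $T<\infty$ and $\mathbb{T}=\{0,1,2,\dots\}$ if $T=\infty$ (supermartingale properties and Snell envelopes are on $\mathbb{T}$ unless stated otherwise; the Snell envelope of a process is the smallest supermartingale dominating it). Let $(\Omega,\mathcal{F},P)$ be a probability space with filtration $(\mathcal{F}_t)_{t\le T}$, $\mathcal{F}_0$ trivial. Let $\sigma$ be a stopping time with values in $\{0,1,\dots\}\cup\{\infty\}$, $P(\sigma>0)=1$; $D_t=\{t<\sigma\}$, $D_\infty=\{\sigma=\infty\}$. Let $G=(G_t)_{t\in\mathbb{T}\cup\{T\}}$ be adapted, with $G_t=\Delta$ on $D_t^c$ ($\Delta$ auxiliary, $0\cdot\Delta=0$), $E[\sup_{t\le T}|G_t|1_{D_t}]<\infty$, and $G_\infty=\limsup_{t\to\infty}G_t$ if $T=\infty$. Effective horizon $T_e=T\wedge\inf\{0\le t<T:P(D_{t+1}\mid\mathcal{F}_t)=0\}$, $\inf\emptyset=\infty$. *)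

theory Defs
  imports "HOL-Probability.Probability" "HOL-Library.Extended_Nat"
begin

text \<open>Discrete time is modelled by enat: finite times are enat t, the time
  infinity is the value infinity.  A process is a map enat => 'a => real.\<close>

text \<open>Index sets: TT T is the set of finite t with t <= T (the set called \<T> in the paper);
  TTbar T is \<T> together with T, i.e. all t <= T (including infinity if T = infinity).\<close>
definition TT :: "enat \<Rightarrow> enat set" where
  "TT T = {t. t \<le> T \<and> t \<noteq> \<infinity>}"

definition TTbar :: "enat \<Rightarrow> enat set" where
  "TTbar T = {t. t \<le> T}"

definition filtration_on :: "'a measure \<Rightarrow> (enat \<Rightarrow> 'a measure) \<Rightarrow> enat set \<Rightarrow> bool" where
  "filtration_on M F I \<longleftrightarrow>
     (\<forall>t\<in>I. subalgebra M (F t)) \<and>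
     (\<forall>s\<in>I. \<forall>t\<in>I. s \<le> t \<longrightarrow> sets (F s) \<subseteq> sets (F t))"

definition adapted_on :: "(enat \<Rightarrow> 'a measure) \<Rightarrow> enat set \<Rightarrow> (enat \<Rightarrow> 'a \<Rightarrow> real) \<Rightarrow> bool" where
  "adapted_on F I X \<longleftrightarrow> (\<forall>t\<in>I. X t \<in> borel_measurable (F t))"

definition supermartingale_on ::
  "'a measure \<Rightarrow> (enat \<Rightarrow> 'a measure) \<Rightarrow> enat set \<Rightarrow> (enat \<Rightarrow> 'a \<Rightarrow> real) \<Rightarrow> bool" where
  "supermartingale_on M F I X \<longleftrightarrow>
     adapted_on F I X \<and> (\<forall>t\<in>I. integrable M (X t)) \<and>
     (\<forall>s\<in>I. \<forall>t\<in>I. s \<le> t \<longrightarrow> (AE \<omega> in M. real_cond_exp M (F s) (X t) \<omega> \<le> X s \<omega>))"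

definition snell_envelope_on ::
  "'a measure \<Rightarrow> (enat \<Rightarrow> 'a measure) \<Rightarrow> enat set \<Rightarrow> (enat \<Rightarrow> 'a \<Rightarrow> real) \<Rightarrow> (enat \<Rightarrow> 'a \<Rightarrow> real) \<Rightarrow> bool" where
  "snell_envelope_on M F I X Y \<longleftrightarrow>
     supermartingale_on M F I Y \<and> (\<forall>t\<in>I. AE \<omega> in M. X t \<omega> \<le> Y t \<omega>) \<and>
     (\<forall>Z. supermartingale_on M F I Z \<and> (\<forall>t\<in>I. AE \<omega> in M. X t \<omega> \<le> Z t \<omega>)
          \<longrightarrow> (\<forall>t\<in>I. AE \<omega> in M. Y t \<omega> \<le> Z t \<omega>))"

definition Dset :: "'a measure \<Rightarrow> ('a \<Rightarrow> enat) \<Rightarrow> enat \<Rightarrow> 'a set" where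
  "Dset M \<sigma> t = {\<omega> \<in> space M. if t = \<infinity> then \<sigma> \<omega> = \<infinity> else t < \<sigma> \<omega>}"

definition eff_horizon ::
  "'a measure \<Rightarrow> (enat \<Rightarrow> 'a measure) \<Rightarrow> ('a \<Rightarrow> enat) \<Rightarrow> enat \<Rightarrow> 'a \<Rightarrow> enat" where
  "eff_horizon M F \<sigma> T \<omega> = min T
     (INF t \<in> {t::nat. enat t < T \<and>
                 real_cond_exp M (F (enat t)) (indicator (Dset M \<sigma> (enat (Suc t)))) \<omega> = 0}. enat t)"

text \<open>Product of a real process S with a Delta-valued process X, where X is only
  meaningful on D_t and equals the cemetery Delta off D_t; the convention 0 * Delta = 0
  is implemented by setting the product to 0 off D_t.\<close>
definition kprod ::
  "'a measure \<Rightarrow> ('a \<Rightarrow> enat) \<Rightarrow> (enat \<Rightarrow> 'a \<Rightarrow> real) \<Rightarrow> (enat \<Rightarrow> 'a \<Rightarrow> real) \<Rightarrow> enat \<Rightarrow> 'a \<Rightarrow> real" where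
  "kprod M \<sigma> S X t \<omega> = (if \<omega> \<in> Dset M \<sigma> t then S t \<omega> * X t \<omega> else 0)"

definition stopped :: "('a \<Rightarrow> enat) \<Rightarrow> (enat \<Rightarrow> 'a \<Rightarrow> real) \<Rightarrow> enat \<Rightarrow> 'a \<Rightarrow> real" where
  "stopped \<tau> X t \<omega> = X (min t (\<tau> \<omega>)) \<omega>"

end

theory Submission
  imports Defs
begin

text \<open>
  For (ii), a supermartingale \<open>Z\<close> above the stopped weighted reward \<open>S G\<close> yields the
  competitor \<open>W = min V (max G (Z / S))\<close> before \<open>T\<^sub>e\<close> (and \<open>W = V\<close> afterwards): it
  dominates \<open>G\<close>, and \<open>S W = min (S V) Z\<close> is again a supermartingale, so the minimality of
  \<open>V\<close> gives \<open>S V \<le> S W \<le> Z\<close>. Conversely, \<open>S > 0\<close> on \<open>D\<^sub>t\<close> lets one cancel \<open>S\<close>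
  in comparisons of weighted processes.

  For (iii), the indicators of \<open>D\<^sub>t\<close> form a supermartingale above the target process
  \<open>1\<^bsub>{V = G} \<inter> D\<^sub>t\<^esub> + 1\<^bsub>{t = \<sigma> = \<infinity>}\<^esub>\<close>, so its Snell envelope lies between the target
  and \<open>1\<^bsub>D\<^sub>t\<^esub>\<close>. Processes squeezed like this are exactly the nonnegative ones equal to 1
  on \<open>D\<^sub>t \<inter> {V = G}\<close> and to \<open>1\<^bsub>{\<sigma> = \<infinity>}\<^esub>\<close> at infinity, and taking minima with \<open>S\<close>
  transfers minimality between the two classes. The bound \<open>0 \<le> S \<le> 1\<^bsub>D\<^sub>t\<^esub>\<close> also turns
  (i') into (i).
\<close>

lemma enat_less_INF_iff:
  "enat k < (INF n\<in>A. enat n) \<longleftrightarrow> (\<forall>n\<in>A. k < n)"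
proof
  assume "enat k < (INF n\<in>A. enat n)"
  then show "\<forall>n\<in>A. k < n"
    by (metis INF_lower enat_ord_simps(2) order_less_le_trans)
next
  assume "\<forall>n\<in>A. k < n"
  then have "enat (Suc k) \<le> (INF n\<in>A. enat n)"
    by (auto intro!: INF_greatest)
  then show "enat k < (INF n\<in>A. enat n)"
    by (metis enat_ord_simps(2) lessI order_less_le_trans)
qed

lemma mult_min_max_divide:
  fixes a v g z :: real
  assumes "0 < a"
  shows "a * min v (max g (z / a)) = min (a * v) (max (a * g) z)"
  using assms by (simp add: min_mult_distrib_left max_mult_distrib_left)

lemma TT_subset_TTbar: "TT T \<subseteq> TTbar T"
  unfolding TT_def TTbar_def by auto

lemma min_in_TT:
  assumes "t \<in> TT T"
  shows "min t s \<in> TT T"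
proof -
  have "t \<le> T" "t \<noteq> \<infinity>" using assms by (simp_all add: TT_def)
  have "min t s \<le> T" by (rule order_trans[OF min.cobounded1 \<open>t \<le> T\<close>])
  moreover have "min t s \<noteq> \<infinity>"
    using \<open>t \<noteq> \<infinity>\<close> min.cobounded1[of t s] by (metis enat_ord_simps(5))
  ultimately show ?thesis by (simp add: TT_def)
qed

lemma TTbar_cases:
  assumes "t \<in> TTbar T"
  obtains "t \<in> TT T" | "t = \<infinity>" "T = \<infinity>"
  using assms unfolding TT_def TTbar_def by force

lemma AE_TT_iff: "(AE \<omega> in M. \<forall>t\<in>TT T. P t \<omega>) \<longleftrightarrow> (\<forall>t\<in>TT T. AE \<omega> in M. P t \<omega>)"
  by (rule AE_ball_countable) (rule countableI_type)

lemma Dset_antimono: "s \<le> t \<Longrightarrow> Dset M \<sigma> t \<subseteq> Dset M \<sigma> s"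
  unfolding Dset_def by (auto split: if_splits dest: order.strict_trans1)

lemma less_eff_horizon_iff:
  "enat k < eff_horizon M F \<sigma> T \<omega> \<longleftrightarrow> enat k < T \<and>
     (\<forall>n\<in>{..k}. real_cond_exp M (F (enat n)) (indicator (Dset M \<sigma> (enat (Suc n)))) \<omega> \<noteq> 0)"
proof -
  have "enat n < T" if "enat k < T" "n \<le> k" for n
    using le_less_trans[of "enat n" "enat k" T] that by simp
  then show ?thesis
    unfolding eff_horizon_def by (auto simp: enat_less_INF_iff not_less) (blast dest: leD)
qed

lemma filtration_on_subset:
  assumes "filtration_on M F I" "J \<subseteq> I"
  shows "filtration_on M F J"
  unfolding filtration_on_def
proof (intro conjI ballI impI)
  fix t assume "t \<in> J"
  with assms show "subalgebra M (F t)" unfolding filtration_on_def by auto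
next
  fix s t assume "s \<in> J" "t \<in> J" "s \<le> t"
  with assms(2) have "s \<in> I" "t \<in> I" by auto
  with assms(1) \<open>s \<le> t\<close> show "sets (F s) \<subseteq> sets (F t)" unfolding filtration_on_def by auto
qed

lemma filtration_on_subalgebra: "filtration_on M F I \<Longrightarrow> t \<in> I \<Longrightarrow> subalgebra M (F t)"
  unfolding filtration_on_def by blast

lemma adapted_on_measurable:
  "filtration_on M F I \<Longrightarrow> adapted_on F I X \<Longrightarrow> t \<in> I \<Longrightarrow> X t \<in> borel_measurable M"
  unfolding adapted_on_def by (blast intro: measurable_from_subalg filtration_on_subalgebra)

context prob_space
begin

lemma filtration_on_sigma_finite:
  "filtration_on M F I \<Longrightarrow> t \<in> I \<Longrightarrow> sigma_finite_subalgebra M (F t)"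
  by (rule finite_measure_subalgebra_is_sigma_finite)
     (simp add: finite_measure_subalgebra_def finite_measure_subalgebra_axioms_def
       filtration_on_subalgebra finite_measure_axioms)

lemma supermartingale_on_min:
  assumes filt: "filtration_on M F I"
    and X: "supermartingale_on M F I X" and Y: "supermartingale_on M F I Y"
    and U: "adapted_on F I U"
    and U_eq: "\<And>t. t \<in> I \<Longrightarrow> AE \<omega> in M. U t \<omega> = min (X t \<omega>) (Y t \<omega>)"
  shows "supermartingale_on M F I U"
proof -
  have X_meas: "X t \<in> borel_measurable M" and Y_meas: "Y t \<in> borel_measurable M"
    and U_meas: "U t \<in> borel_measurable M" if "t \<in> I" for t
    using X Y U that adapted_on_measurable[OF filt] by (auto simp: supermartingale_on_def)
  have X_int: "integrable M (X t)" and Y_int: "integrable M (Y t)" if "t \<in> I" for t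
    using X Y that by (auto simp: supermartingale_on_def)
  have U_int: "integrable M (U t)" if "t \<in> I" for t
  proof -
    have "integrable M (U t) \<longleftrightarrow> integrable M (\<lambda>\<omega>. min (X t \<omega>) (Y t \<omega>))"
      by (rule integrable_cong_AE) (use X_meas Y_meas U_meas that U_eq in auto)
    then show ?thesis using X_int Y_int that by auto
  qed
  have "AE \<omega> in M. real_cond_exp M (F s) (U t) \<omega> \<le> U s \<omega>"
    if st: "s \<in> I" "t \<in> I" "s \<le> t" for s t
  proof -
    interpret Fs: sigma_finite_subalgebra M "F s"
      using filtration_on_sigma_finite[OF filt st(1)] .
    have "AE \<omega> in M. real_cond_exp M (F s) (U t) \<omega>
        = real_cond_exp M (F s) (\<lambda>\<omega>. min (X t \<omega>) (Y t \<omega>)) \<omega>"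
      by (rule Fs.real_cond_exp_cong) (use X_meas Y_meas U_meas st U_eq in auto)
    moreover have "AE \<omega> in M. real_cond_exp M (F s) (\<lambda>\<omega>. min (X t \<omega>) (Y t \<omega>)) \<omega>
        \<le> real_cond_exp M (F s) (X t) \<omega>"
      by (rule Fs.real_cond_exp_mono) (use X_int Y_int st in auto)
    moreover have "AE \<omega> in M. real_cond_exp M (F s) (\<lambda>\<omega>. min (X t \<omega>) (Y t \<omega>)) \<omega>
        \<le> real_cond_exp M (F s) (Y t) \<omega>"
      by (rule Fs.real_cond_exp_mono) (use X_int Y_int st in auto)
    moreover have "AE \<omega> in M. real_cond_exp M (F s) (X t) \<omega> \<le> X s \<omega>"
      and "AE \<omega> in M. real_cond_exp M (F s) (Y t) \<omega> \<le> Y s \<omega>"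
      using X Y st unfolding supermartingale_on_def by blast+
    moreover have "AE \<omega> in M. U s \<omega> = min (X s \<omega>) (Y s \<omega>)"
      using U_eq st by blast
    ultimately show ?thesis by eventually_elim linarith
  qed
  then show ?thesis unfolding supermartingale_on_def using U U_int by blast
qed

lemma supermartingale_on_indicator_antimono:
  assumes filt: "filtration_on M F I"
    and A_sets: "\<And>t. t \<in> I \<Longrightarrow> A t \<in> sets (F t)"
    and A_antimono: "\<And>s t. s \<in> I \<Longrightarrow> t \<in> I \<Longrightarrow> s \<le> t \<Longrightarrow> A t \<subseteq> A s"
  shows "supermartingale_on M F I (\<lambda>t. indicator (A t))"
proof -
  have int: "integrable M (indicator (A t) :: 'a \<Rightarrow> real)" if "t \<in> I" for t
  proof -
    have "A t \<in> sets M"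
      using A_sets[OF that] filtration_on_subalgebra[OF filt that] by (auto simp: subalgebra_def)
    then show ?thesis by (auto simp: emeasure_space_1 less_top[symmetric])
  qed
  have "AE \<omega> in M. real_cond_exp M (F s) (indicator (A t)) \<omega> \<le> indicator (A s) \<omega>"
    if st: "s \<in> I" "t \<in> I" "s \<le> t" for s t
  proof -
    interpret Fs: sigma_finite_subalgebra M "F s"
      using filtration_on_sigma_finite[OF filt st(1)] .
    have "AE \<omega> in M. real_cond_exp M (F s) (indicator (A t)) \<omega>
        \<le> real_cond_exp M (F s) (indicator (A s)) \<omega>"
      by (rule Fs.real_cond_exp_mono) (use int st A_antimono[OF st] in \<open>auto simp: indicator_def\<close>)
    moreover have "AE \<omega> in M. real_cond_exp M (F s) (indicator (A s)) \<omega> = indicator (A s) \<omega>"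
      by (rule Fs.real_cond_exp_F_meas) (use int st A_sets in auto)
    ultimately show ?thesis by eventually_elim simp
  qed
  then show ?thesis using int A_sets by (auto simp: supermartingale_on_def adapted_on_def)
qed

end

lemma stopped_kprod_mono:
  assumes t: "t \<in> TT T"
    and le: "\<forall>s\<in>TT T. \<omega> \<in> Dset M \<sigma> s \<longrightarrow> 0 \<le> S s \<omega> \<and> X s \<omega> \<le> Y s \<omega>"
  shows "stopped \<tau> (kprod M \<sigma> S X) t \<omega> \<le> stopped \<tau> (kprod M \<sigma> S Y) t \<omega>"
proof -
  have "min t (\<tau> \<omega>) \<in> TT T" using t by (rule min_in_TT)
  then show ?thesis
    unfolding stopped_def kprod_def using le by (simp add: mult_left_mono)
qed

lemma stopped_kprod_le_cancel:
  assumes "t < \<tau> \<omega>" "\<omega> \<in> Dset M \<sigma> t" "0 < S t \<omega>"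
  shows "stopped \<tau> (kprod M \<sigma> S X) t \<omega> \<le> stopped \<tau> (kprod M \<sigma> S Y) t \<omega> \<longleftrightarrow> X t \<omega> \<le> Y t \<omega>"
  using assms by (simp add: stopped_def kprod_def min_absorb1 less_imp_le)

text \<open>
  Where \<open>S t \<omega> = 0\<close> the quotient \<open>Z t \<omega> / S t \<omega>\<close> is the junk value 0; this does not
  matter, since \<open>kprod\<close> ignores the value off \<open>D\<^sub>t\<close> and \<open>S > 0\<close> almost everywhere on \<open>D\<^sub>t\<close>.
\<close>
definition capped ::
  "('a \<Rightarrow> enat) \<Rightarrow> (enat \<Rightarrow> 'a \<Rightarrow> real) \<Rightarrow> (enat \<Rightarrow> 'a \<Rightarrow> real) \<Rightarrow> (enat \<Rightarrow> 'a \<Rightarrow> real)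
     \<Rightarrow> (enat \<Rightarrow> 'a \<Rightarrow> real) \<Rightarrow> enat \<Rightarrow> 'a \<Rightarrow> real" where
  "capped \<tau> S G V Z t \<omega> =
     (if t < \<tau> \<omega> then min (V t \<omega>) (max (G t \<omega>) (Z t \<omega> / S t \<omega>)) else V t \<omega>)"

lemma stopped_kprod_capped_split:
  "stopped \<tau> (kprod M \<sigma> S (capped \<tau> S G V Z)) t \<omega> =
     (if t < \<tau> \<omega> then kprod M \<sigma> S (capped \<tau> S G V Z) t \<omega> else stopped \<tau> (kprod M \<sigma> S V) t \<omega>)"
proof (cases "t < \<tau> \<omega>")
  case False
  then have "min t (\<tau> \<omega>) = \<tau> \<omega>" by simp
  then show ?thesis using False by (simp add: stopped_def kprod_def capped_def)
qed (simp add: stopped_def min_absorb1 less_imp_le)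

lemma stopped_kprod_capped:
  assumes t: "t \<in> TT T"
    and S_pos: "\<forall>s\<in>TT T. \<omega> \<in> Dset M \<sigma> s \<longrightarrow> 0 < S s \<omega>"
    and V_eq_G: "\<forall>s\<in>TT T. \<tau> \<omega> \<le> s \<and> \<omega> \<in> Dset M \<sigma> s \<longrightarrow> V s \<omega> = G s \<omega>"
    and Z_ge: "stopped \<tau> (kprod M \<sigma> S G) t \<omega> \<le> Z t \<omega>"
  shows "stopped \<tau> (kprod M \<sigma> S (capped \<tau> S G V Z)) t \<omega>
      = min (stopped \<tau> (kprod M \<sigma> S V) t \<omega>) (Z t \<omega>)"
proof (cases "t < \<tau> \<omega>")
  case before: True
  then have stop_t: "min t (\<tau> \<omega>) = t" by simp
  show ?thesis
  proof (cases "\<omega> \<in> Dset M \<sigma> t")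
    case True
    then have "0 < S t \<omega>" using S_pos t by blast
    then have "S t \<omega> * min (V t \<omega>) (max (G t \<omega>) (Z t \<omega> / S t \<omega>))
        = min (S t \<omega> * V t \<omega>) (max (S t \<omega> * G t \<omega>) (Z t \<omega>))"
      by (rule mult_min_max_divide)
    then show ?thesis
      using before True Z_ge by (simp add: stopped_def kprod_def capped_def stop_t max_absorb2)
  next
    case False
    then show ?thesis using Z_ge by (simp add: stopped_def kprod_def stop_t)
  qed
next
  case False
  then have stop_\<tau>: "min t (\<tau> \<omega>) = \<tau> \<omega>" by simp
  then have "\<tau> \<omega> \<in> TT T" using min_in_TT[OF t, of "\<tau> \<omega>"] by simp
  then have "kprod M \<sigma> S V (\<tau> \<omega>) \<omega> = kprod M \<sigma> S G (\<tau> \<omega>) \<omega>"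
    using V_eq_G by (auto simp: kprod_def)
  moreover have "kprod M \<sigma> S (capped \<tau> S G V Z) (\<tau> \<omega>) \<omega> = kprod M \<sigma> S V (\<tau> \<omega>) \<omega>"
    by (simp add: kprod_def capped_def)
  ultimately show ?thesis using Z_ge by (simp add: stopped_def stop_\<tau>)
qed

definition exercise_indicator ::
  "'a measure \<Rightarrow> ('a \<Rightarrow> enat) \<Rightarrow> (enat \<Rightarrow> 'a \<Rightarrow> real) \<Rightarrow> (enat \<Rightarrow> 'a \<Rightarrow> real) \<Rightarrow> enat \<Rightarrow> 'a \<Rightarrow> real"
  where
  "exercise_indicator M \<sigma> V G t \<omega> =
     indicator {\<omega> \<in> Dset M \<sigma> t. t \<noteq> \<infinity> \<and> V t \<omega> = G t \<omega>} \<omega>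
     + indicator {\<omega> \<in> space M. t = \<infinity> \<and> \<sigma> \<omega> = \<infinity>} \<omega>"

definition exercise_majorant ::
  "'a measure \<Rightarrow> (enat \<Rightarrow> 'a measure) \<Rightarrow> enat \<Rightarrow> ('a \<Rightarrow> enat) \<Rightarrow> (enat \<Rightarrow> 'a \<Rightarrow> real)
     \<Rightarrow> (enat \<Rightarrow> 'a \<Rightarrow> real) \<Rightarrow> (enat \<Rightarrow> 'a \<Rightarrow> real) \<Rightarrow> bool"
  where
  "exercise_majorant M F T \<sigma> V G Z \<longleftrightarrow>
     (\<forall>t\<in>TTbar T. AE \<omega> in M. 0 \<le> Z t \<omega>) \<and>
     supermartingale_on M F (TTbar T) Z \<and>
     (\<forall>t\<in>TT T. AE \<omega> in M. \<omega> \<in> Dset M \<sigma> t \<and> V t \<omega> = G t \<omega> \<longrightarrow> Z t \<omega> = 1) \<and>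
     (T = \<infinity> \<longrightarrow> (AE \<omega> in M. Z \<infinity> \<omega> = indicator (Dset M \<sigma> \<infinity>) \<omega>))"

lemma exercise_indicator_nonneg: "0 \<le> exercise_indicator M \<sigma> V G t \<omega>"
  by (simp add: exercise_indicator_def)

lemma exercise_indicator_le_Dset: "exercise_indicator M \<sigma> V G t \<omega> \<le> indicator (Dset M \<sigma> t) \<omega>"
  by (auto simp: exercise_indicator_def indicator_def Dset_def)

lemma exercise_indicator_infinity:
  "exercise_indicator M \<sigma> V G \<infinity> \<omega> = indicator (Dset M \<sigma> \<infinity>) \<omega>"
  by (auto simp: exercise_indicator_def indicator_def Dset_def)

lemma exercise_indicator_finite:
  "t \<noteq> \<infinity> \<Longrightarrow> exercise_indicator M \<sigma> V G t \<omega> = indicator {\<omega> \<in> Dset M \<sigma> t. V t \<omega> = G t \<omega>} \<omega>"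
  by (simp add: exercise_indicator_def indicator_def)

lemma exercise_indicator_le_if_majorant:
  assumes "exercise_majorant M F T \<sigma> V G Z"
  shows "\<forall>t\<in>TTbar T. AE \<omega> in M. exercise_indicator M \<sigma> V G t \<omega> \<le> Z t \<omega>"
proof
  fix t assume t: "t \<in> TTbar T"
  show "AE \<omega> in M. exercise_indicator M \<sigma> V G t \<omega> \<le> Z t \<omega>"
  proof (cases rule: TTbar_cases[OF t])
    case 1
    then have "t \<noteq> \<infinity>" by (simp add: TT_def)
    have "AE \<omega> in M. 0 \<le> Z t \<omega>"
      and "AE \<omega> in M. \<omega> \<in> Dset M \<sigma> t \<and> V t \<omega> = G t \<omega> \<longrightarrow> Z t \<omega> = 1"
      using assms t 1 unfolding exercise_majorant_def by blast+
    then show ?thesis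
      by eventually_elim (simp add: exercise_indicator_finite[OF \<open>t \<noteq> \<infinity>\<close>] indicator_def)
  next
    case 2
    then have "AE \<omega> in M. Z \<infinity> \<omega> = indicator (Dset M \<sigma> \<infinity>) \<omega>"
      using assms unfolding exercise_majorant_def by blast
    then show ?thesis by eventually_elim (simp add: 2 exercise_indicator_infinity)
  qed
qed

lemma exercise_majorant_if_between:
  assumes between: "\<forall>t\<in>TTbar T. AE \<omega> in M.
      exercise_indicator M \<sigma> V G t \<omega> \<le> Z t \<omega> \<and> Z t \<omega> \<le> indicator (Dset M \<sigma> t) \<omega>"
    and super: "supermartingale_on M F (TTbar T) Z"
  shows "exercise_majorant M F T \<sigma> V G Z"
  unfolding exercise_majorant_def
proof (intro conjI ballI impI)
  fix t assume "t \<in> TTbar T"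
  with between have "AE \<omega> in M. exercise_indicator M \<sigma> V G t \<omega> \<le> Z t \<omega>" by simp
  then show "AE \<omega> in M. 0 \<le> Z t \<omega>"
    by eventually_elim (rule order_trans[OF exercise_indicator_nonneg])
next
  show "supermartingale_on M F (TTbar T) Z" by (rule super)
next
  fix t assume t: "t \<in> TT T"
  then have "t \<noteq> \<infinity>" "t \<in> TTbar T" using TT_subset_TTbar by (auto simp: TT_def)
  with between show "AE \<omega> in M. \<omega> \<in> Dset M \<sigma> t \<and> V t \<omega> = G t \<omega> \<longrightarrow> Z t \<omega> = 1"
    by (auto simp: exercise_indicator_finite indicator_def elim!: AE_mp)
next
  assume "T = \<infinity>"
  then have "\<infinity> \<in> TTbar T" by (simp add: TTbar_def)
  with between show "AE \<omega> in M. Z \<infinity> \<omega> = indicator (Dset M \<sigma> \<infinity>) \<omega>"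
    by (auto simp: exercise_indicator_infinity elim!: AE_mp)
qed

lemma positive_on_Dset_iff:
  fixes S :: "enat \<Rightarrow> 'a \<Rightarrow> real"
  assumes "\<forall>t\<in>TTbar T. AE \<omega> in M. 0 \<le> S t \<omega>"
    and "\<forall>t\<in>TTbar T. AE \<omega> in M. S t \<omega> \<le> indicator (Dset M \<sigma> t) \<omega>"
  shows "(\<forall>t\<in>TT T. AE \<omega> in M. (\<omega> \<in> Dset M \<sigma> t \<longrightarrow> 0 < S t \<omega> \<and> S t \<omega> \<le> 1) \<and>
                             (\<omega> \<notin> Dset M \<sigma> t \<longrightarrow> S t \<omega> = 0))
    \<longleftrightarrow> (\<forall>t\<in>TT T. AE \<omega> in M. \<omega> \<in> Dset M \<sigma> t \<longrightarrow> 0 < S t \<omega>)"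
proof -
  have "AE \<omega> in M. (\<omega> \<in> Dset M \<sigma> t \<longrightarrow> 0 < S t \<omega> \<and> S t \<omega> \<le> 1) \<and>
                     (\<omega> \<notin> Dset M \<sigma> t \<longrightarrow> S t \<omega> = 0)"
    if t: "t \<in> TT T" and pos: "AE \<omega> in M. \<omega> \<in> Dset M \<sigma> t \<longrightarrow> 0 < S t \<omega>" for t
  proof -
    have "AE \<omega> in M. 0 \<le> S t \<omega>" "AE \<omega> in M. S t \<omega> \<le> indicator (Dset M \<sigma> t) \<omega>"
      using assms t TT_subset_TTbar by blast+
    with pos show ?thesis by eventually_elim (auto simp: indicator_def)
  qed
  moreover have "AE \<omega> in M. \<omega> \<in> Dset M \<sigma> t \<longrightarrow> 0 < S t \<omega>"
    if "AE \<omega> in M. (\<omega> \<in> Dset M \<sigma> t \<longrightarrow> 0 < S t \<omega> \<and> S t \<omega> \<le> 1) \<and>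
                        (\<omega> \<notin> Dset M \<sigma> t \<longrightarrow> S t \<omega> = 0)" for t
    using that by eventually_elim blast
  ultimately show ?thesis by blast
qed

locale stopping_problem = prob_space M
  for M :: "'a measure" and F :: "enat \<Rightarrow> 'a measure" and T :: enat and \<sigma> :: "'a \<Rightarrow> enat" +
  assumes filtration: "filtration_on M F (TTbar T)"
    and stopping_time: "\<forall>t\<in>TTbar T. {\<omega> \<in> space M. \<sigma> \<omega> \<le> t} \<in> sets (F t)"
begin

abbreviation Te :: "'a \<Rightarrow> enat" where
  "Te \<equiv> eff_horizon M F \<sigma> T"

abbreviation weighted :: "(enat \<Rightarrow> 'a \<Rightarrow> real) \<Rightarrow> (enat \<Rightarrow> 'a \<Rightarrow> real) \<Rightarrow> enat \<Rightarrow> 'a \<Rightarrow> real" where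
  "weighted S X \<equiv> stopped Te (kprod M \<sigma> S X)"

lemma filtration_TT: "filtration_on M F (TT T)"
  using filtration TT_subset_TTbar by (rule filtration_on_subset)

lemma space_F: "t \<in> TTbar T \<Longrightarrow> space (F t) = space M"
  using filtration_on_subalgebra[OF filtration] by (auto simp: subalgebra_def)

lemma measurable_F_mono:
  assumes "s \<le> t" "t \<in> TTbar T" and f: "f \<in> borel_measurable (F s)"
  shows "f \<in> borel_measurable (F t)"
proof (rule borel_measurable_subalgebra[OF _ _ f])
  have "s \<in> TTbar T" using assms by (auto simp: TTbar_def)
  then show "sets (F s) \<subseteq> sets (F t)" "space (F s) = space (F t)"
    using assms filtration space_F by (auto simp: filtration_on_def)
qed

lemma Dset_measurable:
  assumes t: "t \<in> TTbar T"
  shows "Dset M \<sigma> t \<in> sets (F t)"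
proof (cases "t = \<infinity>")
  case True
  have "{\<omega> \<in> space M. \<sigma> \<omega> \<le> enat n} \<in> sets (F t)" for n
  proof -
    have n: "enat n \<in> TTbar T" using True t by (simp add: TTbar_def)
    then have "{\<omega> \<in> space M. \<sigma> \<omega> \<le> enat n} \<in> sets (F (enat n))" using stopping_time by blast
    moreover have "sets (F (enat n)) \<subseteq> sets (F t)"
      using filtration n t True unfolding filtration_on_def by simp
    ultimately show ?thesis by blast
  qed
  then have "space (F t) - (\<Union>n. {\<omega> \<in> space M. \<sigma> \<omega> \<le> enat n}) \<in> sets (F t)"
    by (intro sets.compl_sets sets.countable_UN'') simp_all
  moreover have "Dset M \<sigma> t = space (F t) - (\<Union>n. {\<omega> \<in> space M. \<sigma> \<omega> \<le> enat n})"
    using True t space_F by (auto simp: Dset_def) (metis not_infinity_eq order_refl)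
  ultimately show ?thesis by simp
next
  case False
  then have "Dset M \<sigma> t = space (F t) - {\<omega> \<in> space M. \<sigma> \<omega> \<le> t}"
    using t space_F by (auto simp: Dset_def)
  also have "\<dots> \<in> sets (F t)" using stopping_time t by auto
  finally show ?thesis .
qed

lemma pred_less_eff_horizon:
  assumes t: "t \<in> TT T"
  shows "Measurable.pred (F t) (\<lambda>\<omega>. t < Te \<omega>)"
proof -
  obtain k where k: "t = enat k" using t by (cases t) (auto simp: TT_def)
  have "Measurable.pred (F t)
      (\<lambda>\<omega>. real_cond_exp M (F (enat n)) (indicator (Dset M \<sigma> (enat (Suc n)))) \<omega> \<noteq> 0)"
    if "n \<in> {..k}" for n
  proof -
    have [measurable]:
      "real_cond_exp M (F (enat n)) (indicator (Dset M \<sigma> (enat (Suc n)))) \<in> borel_measurable (F t)"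
      using that k t TT_subset_TTbar by (intro measurable_F_mono[OF _ _ borel_measurable_cond_exp]) auto
    show ?thesis by measurable
  qed
  then have "Measurable.pred (F t) (\<lambda>\<omega>. \<forall>n\<in>{..k}.
      real_cond_exp M (F (enat n)) (indicator (Dset M \<sigma> (enat (Suc n)))) \<omega> \<noteq> 0)"
    by (rule pred_intros_finite(3)[OF finite_atMost])
  then show ?thesis
    by (cases "t < T") (simp_all add: k less_eff_horizon_iff pred_def)
qed

lemma supermartingale_indicator_Dset:
  "supermartingale_on M F (TTbar T) (\<lambda>t. indicator (Dset M \<sigma> t))"
  by (auto intro!: supermartingale_on_indicator_antimono filtration Dset_measurable Dset_antimono)

lemma kprod_measurable:
  assumes "t \<in> TTbar T" "S t \<in> borel_measurable (F t)" "X t \<in> borel_measurable (F t)"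
  shows "kprod M \<sigma> S X t \<in> borel_measurable (F t)"
proof -
  note [measurable] = assms(2,3) Dset_measurable[OF assms(1)]
  have "(\<lambda>\<omega>. if \<omega> \<in> Dset M \<sigma> t then S t \<omega> * X t \<omega> else 0) \<in> borel_measurable (F t)"
    by measurable
  then show ?thesis by (simp add: kprod_def[abs_def])
qed

lemma capped_adapted:
  assumes "adapted_on F (TTbar T) S" "adapted_on F (TT T) G" "adapted_on F (TT T) V"
    "adapted_on F (TT T) Z"
  shows "adapted_on F (TT T) (capped Te S G V Z)"
  unfolding adapted_on_def
proof
  fix t assume t: "t \<in> TT T"
  then have "t \<in> TTbar T" using TT_subset_TTbar by blast
  note [measurable] = pred_less_eff_horizon[OF t]
  have [measurable]: "S t \<in> borel_measurable (F t)" "G t \<in> borel_measurable (F t)"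
    "V t \<in> borel_measurable (F t)" "Z t \<in> borel_measurable (F t)"
    using assms t \<open>t \<in> TTbar T\<close> by (auto simp: adapted_on_def)
  have "(\<lambda>\<omega>. if t < Te \<omega> then min (V t \<omega>) (max (G t \<omega>) (Z t \<omega> / S t \<omega>)) else V t \<omega>)
      \<in> borel_measurable (F t)"
    by measurable
  then show "capped Te S G V Z t \<in> borel_measurable (F t)"
    by (simp add: capped_def[abs_def])
qed

lemma weighted_capped_adapted:
  assumes "adapted_on F (TTbar T) S" "adapted_on F (TT T) (capped Te S G V Z)"
    "adapted_on F (TT T) (weighted S V)"
  shows "adapted_on F (TT T) (weighted S (capped Te S G V Z))"
  unfolding adapted_on_def
proof
  fix t assume t: "t \<in> TT T"
  then have "t \<in> TTbar T" using TT_subset_TTbar by blast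
  note [measurable] = pred_less_eff_horizon[OF t]
  have [measurable]: "kprod M \<sigma> S (capped Te S G V Z) t \<in> borel_measurable (F t)"
    using assms t \<open>t \<in> TTbar T\<close> by (intro kprod_measurable) (auto simp: adapted_on_def)
  have [measurable]: "weighted S V t \<in> borel_measurable (F t)"
    using assms t by (simp add: adapted_on_def)
  have "(\<lambda>\<omega>. if t < Te \<omega> then kprod M \<sigma> S (capped Te S G V Z) t \<omega> else weighted S V t \<omega>)
      \<in> borel_measurable (F t)"
    by measurable
  moreover have "weighted S (capped Te S G V Z) t
      = (\<lambda>\<omega>. if t < Te \<omega> then kprod M \<sigma> S (capped Te S G V Z) t \<omega> else weighted S V t \<omega>)"
    by (rule ext) (rule stopped_kprod_capped_split)
  ultimately show "weighted S (capped Te S G V Z) t \<in> borel_measurable (F t)" by simp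
qed

lemma weighted_mono:
  assumes S_pos: "\<forall>t\<in>TT T. AE \<omega> in M. \<omega> \<in> Dset M \<sigma> t \<longrightarrow> 0 < S t \<omega>"
    and le: "\<forall>t\<in>TT T. AE \<omega> in M. \<omega> \<in> Dset M \<sigma> t \<longrightarrow> X t \<omega> \<le> Y t \<omega>"
  shows "\<forall>t\<in>TT T. AE \<omega> in M. weighted S X t \<omega> \<le> weighted S Y t \<omega>"
proof
  fix t assume t: "t \<in> TT T"
  have "AE \<omega> in M. \<forall>s\<in>TT T. \<omega> \<in> Dset M \<sigma> s \<longrightarrow> 0 < S s \<omega>"
    and "AE \<omega> in M. \<forall>s\<in>TT T. \<omega> \<in> Dset M \<sigma> s \<longrightarrow> X s \<omega> \<le> Y s \<omega>"
    using S_pos le by (simp_all add: AE_TT_iff)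
  then show "AE \<omega> in M. weighted S X t \<omega> \<le> weighted S Y t \<omega>"
    by eventually_elim (auto intro!: stopped_kprod_mono[OF t] simp: less_imp_le)
qed

lemma le_on_Dset_if_weighted_le:
  assumes "AE \<omega> in M. weighted S X t \<omega> \<le> weighted S Y t \<omega>"
    and "AE \<omega> in M. \<omega> \<in> Dset M \<sigma> t \<longrightarrow> 0 < S t \<omega>"
    and "AE \<omega> in M. Te \<omega> \<le> t \<and> \<omega> \<in> Dset M \<sigma> t \<longrightarrow> X t \<omega> \<le> Y t \<omega>"
  shows "AE \<omega> in M. \<omega> \<in> Dset M \<sigma> t \<longrightarrow> X t \<omega> \<le> Y t \<omega>"
  using assms by eventually_elim (metis not_le stopped_kprod_le_cancel)

definition least_weighted_majorant ::
  "(enat \<Rightarrow> 'a \<Rightarrow> real) \<Rightarrow> (enat \<Rightarrow> 'a \<Rightarrow> real) \<Rightarrow> (enat \<Rightarrow> 'a \<Rightarrow> real) \<Rightarrow> bool" where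
  "least_weighted_majorant S G V \<longleftrightarrow>
     (\<forall>t\<in>TT T. AE \<omega> in M. \<omega> \<in> Dset M \<sigma> t \<longrightarrow> G t \<omega> \<le> V t \<omega>) \<and>
     supermartingale_on M F (TT T) (weighted S V) \<and>
     (\<forall>W. adapted_on F (TT T) W \<and>
          (\<forall>t\<in>TT T. AE \<omega> in M. \<omega> \<in> Dset M \<sigma> t \<longrightarrow> G t \<omega> \<le> W t \<omega>) \<and>
          supermartingale_on M F (TT T) (weighted S W)
        \<longrightarrow> (\<forall>t\<in>TT T. AE \<omega> in M. \<omega> \<in> Dset M \<sigma> t \<longrightarrow> V t \<omega> \<le> W t \<omega>))"

lemma least_weighted_majorant_if_snell:
  assumes S_pos: "\<forall>t\<in>TT T. AE \<omega> in M. \<omega> \<in> Dset M \<sigma> t \<longrightarrow> 0 < S t \<omega>"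
    and V_eq_G: "\<forall>t\<in>TT T. AE \<omega> in M. Te \<omega> \<le> t \<and> \<omega> \<in> Dset M \<sigma> t \<longrightarrow> V t \<omega> = G t \<omega>"
    and snell: "snell_envelope_on M F (TT T) (weighted S G) (weighted S V)"
  shows "least_weighted_majorant S G V"
  unfolding least_weighted_majorant_def
proof (intro conjI allI impI ballI)
  fix t assume t: "t \<in> TT T"
  show "AE \<omega> in M. \<omega> \<in> Dset M \<sigma> t \<longrightarrow> G t \<omega> \<le> V t \<omega>"
  proof (rule le_on_Dset_if_weighted_le)
    show "AE \<omega> in M. weighted S G t \<omega> \<le> weighted S V t \<omega>"
      using snell t by (simp add: snell_envelope_on_def)
    show "AE \<omega> in M. \<omega> \<in> Dset M \<sigma> t \<longrightarrow> 0 < S t \<omega>"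
      using S_pos t by blast
    show "AE \<omega> in M. Te \<omega> \<le> t \<and> \<omega> \<in> Dset M \<sigma> t \<longrightarrow> G t \<omega> \<le> V t \<omega>"
      using V_eq_G[rule_format, OF t] by eventually_elim simp
  qed
next
  show "supermartingale_on M F (TT T) (weighted S V)"
    using snell by (simp add: snell_envelope_on_def)
next
  fix W t
  assume W: "adapted_on F (TT T) W \<and>
      (\<forall>t\<in>TT T. AE \<omega> in M. \<omega> \<in> Dset M \<sigma> t \<longrightarrow> G t \<omega> \<le> W t \<omega>) \<and>
      supermartingale_on M F (TT T) (weighted S W)"
    and t: "t \<in> TT T"
  show "AE \<omega> in M. \<omega> \<in> Dset M \<sigma> t \<longrightarrow> V t \<omega> \<le> W t \<omega>"
  proof (rule le_on_Dset_if_weighted_le)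
    have "\<forall>t\<in>TT T. AE \<omega> in M. weighted S G t \<omega> \<le> weighted S W t \<omega>"
      using weighted_mono[OF S_pos] W by blast
    then show "AE \<omega> in M. weighted S V t \<omega> \<le> weighted S W t \<omega>"
      using snell W t unfolding snell_envelope_on_def by blast
    show "AE \<omega> in M. \<omega> \<in> Dset M \<sigma> t \<longrightarrow> 0 < S t \<omega>"
      using S_pos t by blast
    have "AE \<omega> in M. \<omega> \<in> Dset M \<sigma> t \<longrightarrow> G t \<omega> \<le> W t \<omega>"
      using W t by blast
    with V_eq_G[rule_format, OF t]
    show "AE \<omega> in M. Te \<omega> \<le> t \<and> \<omega> \<in> Dset M \<sigma> t \<longrightarrow> V t \<omega> \<le> W t \<omega>"
      by eventually_elim simp
  qed
qed

lemma weighted_le_supermartingale_majorant: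
  assumes S_adapted: "adapted_on F (TTbar T) S" and G_adapted: "adapted_on F (TT T) G"
    and V_adapted: "adapted_on F (TT T) V"
    and S_pos: "\<forall>t\<in>TT T. AE \<omega> in M. \<omega> \<in> Dset M \<sigma> t \<longrightarrow> 0 < S t \<omega>"
    and V_eq_G: "\<forall>t\<in>TT T. AE \<omega> in M. Te \<omega> \<le> t \<and> \<omega> \<in> Dset M \<sigma> t \<longrightarrow> V t \<omega> = G t \<omega>"
    and least: "least_weighted_majorant S G V"
    and Z_super: "supermartingale_on M F (TT T) Z"
    and Z_ge: "\<forall>t\<in>TT T. AE \<omega> in M. weighted S G t \<omega> \<le> Z t \<omega>"
  shows "\<forall>t\<in>TT T. AE \<omega> in M. weighted S V t \<omega> \<le> Z t \<omega>"
proof -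
  have G_le_V: "\<forall>t\<in>TT T. AE \<omega> in M. \<omega> \<in> Dset M \<sigma> t \<longrightarrow> G t \<omega> \<le> V t \<omega>"
    and super: "supermartingale_on M F (TT T) (weighted S V)"
    using least unfolding least_weighted_majorant_def by blast+
  let ?W = "capped Te S G V Z"
  have W_eq: "AE \<omega> in M. weighted S ?W t \<omega> = min (weighted S V t \<omega>) (Z t \<omega>)"
    if t: "t \<in> TT T" for t
  proof -
    have "AE \<omega> in M. \<forall>s\<in>TT T. \<omega> \<in> Dset M \<sigma> s \<longrightarrow> 0 < S s \<omega>"
      and "AE \<omega> in M. \<forall>s\<in>TT T. Te \<omega> \<le> s \<and> \<omega> \<in> Dset M \<sigma> s \<longrightarrow> V s \<omega> = G s \<omega>"
      using S_pos V_eq_G by (simp_all add: AE_TT_iff)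
    with Z_ge[rule_format, OF t] show ?thesis
      by eventually_elim (rule stopped_kprod_capped[OF t])
  qed
  have W_adapted: "adapted_on F (TT T) ?W"
    using S_adapted G_adapted V_adapted Z_super
    by (intro capped_adapted) (auto simp: supermartingale_on_def)
  have "supermartingale_on M F (TT T) (weighted S ?W)"
  proof (rule supermartingale_on_min[OF filtration_TT super Z_super _ W_eq])
    show "adapted_on F (TT T) (weighted S ?W)"
      using S_adapted W_adapted super
      by (intro weighted_capped_adapted) (auto simp: supermartingale_on_def)
  qed
  moreover have "\<forall>t\<in>TT T. AE \<omega> in M. \<omega> \<in> Dset M \<sigma> t \<longrightarrow> G t \<omega> \<le> ?W t \<omega>"
  proof
    fix t assume "t \<in> TT T"
    with G_le_V show "AE \<omega> in M. \<omega> \<in> Dset M \<sigma> t \<longrightarrow> G t \<omega> \<le> ?W t \<omega>"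
      by (auto simp: capped_def elim!: AE_mp)
  qed
  ultimately have "\<forall>t\<in>TT T. AE \<omega> in M. \<omega> \<in> Dset M \<sigma> t \<longrightarrow> V t \<omega> \<le> ?W t \<omega>"
    using least W_adapted unfolding least_weighted_majorant_def by blast
  then have V_le_W: "\<forall>t\<in>TT T. AE \<omega> in M. weighted S V t \<omega> \<le> weighted S ?W t \<omega>"
    by (rule weighted_mono[OF S_pos])
  show ?thesis
  proof
    fix t assume t: "t \<in> TT T"
    from V_le_W[rule_format, OF t] W_eq[OF t] show "AE \<omega> in M. weighted S V t \<omega> \<le> Z t \<omega>"
      by eventually_elim simp
  qed
qed

lemma snell_if_least_weighted_majorant:
  assumes "adapted_on F (TTbar T) S" "adapted_on F (TT T) G" "adapted_on F (TT T) V"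
    and S_pos: "\<forall>t\<in>TT T. AE \<omega> in M. \<omega> \<in> Dset M \<sigma> t \<longrightarrow> 0 < S t \<omega>"
    and "\<forall>t\<in>TT T. AE \<omega> in M. Te \<omega> \<le> t \<and> \<omega> \<in> Dset M \<sigma> t \<longrightarrow> V t \<omega> = G t \<omega>"
    and least: "least_weighted_majorant S G V"
  shows "snell_envelope_on M F (TT T) (weighted S G) (weighted S V)"
proof -
  have "\<forall>t\<in>TT T. AE \<omega> in M. \<omega> \<in> Dset M \<sigma> t \<longrightarrow> G t \<omega> \<le> V t \<omega>"
    and "supermartingale_on M F (TT T) (weighted S V)"
    using least unfolding least_weighted_majorant_def by blast+
  then show ?thesis
    using weighted_mono[OF S_pos] weighted_le_supermartingale_majorant[OF assms]
    unfolding snell_envelope_on_def by blast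
qed

lemma least_weighted_majorant_iff_snell:
  assumes "adapted_on F (TTbar T) S" "adapted_on F (TT T) G" "adapted_on F (TT T) V"
    and "\<forall>t\<in>TT T. AE \<omega> in M. \<omega> \<in> Dset M \<sigma> t \<longrightarrow> 0 < S t \<omega>"
    and "\<forall>t\<in>TT T. AE \<omega> in M. Te \<omega> \<le> t \<and> \<omega> \<in> Dset M \<sigma> t \<longrightarrow> V t \<omega> = G t \<omega>"
  shows "least_weighted_majorant S G V \<longleftrightarrow>
    snell_envelope_on M F (TT T) (weighted S G) (weighted S V)"
  using assms least_weighted_majorant_if_snell snell_if_least_weighted_majorant by blast

lemma snell_exercise_le_Dset:
  assumes "snell_envelope_on M F (TTbar T) (exercise_indicator M \<sigma> V G) S"
  shows "\<forall>t\<in>TTbar T. AE \<omega> in M. S t \<omega> \<le> indicator (Dset M \<sigma> t) \<omega>"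
proof -
  have "\<forall>t\<in>TTbar T. AE \<omega> in M. exercise_indicator M \<sigma> V G t \<omega> \<le> indicator (Dset M \<sigma> t) \<omega>"
    by (simp add: exercise_indicator_le_Dset)
  then show ?thesis
    using assms supermartingale_indicator_Dset unfolding snell_envelope_on_def by blast
qed

lemma exercise_majorant_min:
  assumes S: "exercise_majorant M F T \<sigma> V G S"
    and Z_super: "supermartingale_on M F (TTbar T) Z"
    and Z_ge: "\<forall>t\<in>TTbar T. AE \<omega> in M. exercise_indicator M \<sigma> V G t \<omega> \<le> Z t \<omega>"
  shows "exercise_majorant M F T \<sigma> V G (\<lambda>t \<omega>. min (S t \<omega>) (Z t \<omega>))"
  unfolding exercise_majorant_def
proof (intro conjI ballI impI)
  fix t assume t: "t \<in> TTbar T"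
  have "AE \<omega> in M. 0 \<le> S t \<omega>" using S t unfolding exercise_majorant_def by blast
  moreover have "AE \<omega> in M. exercise_indicator M \<sigma> V G t \<omega> \<le> Z t \<omega>" using Z_ge t by blast
  ultimately show "AE \<omega> in M. 0 \<le> min (S t \<omega>) (Z t \<omega>)"
    by eventually_elim (simp add: order_trans[OF exercise_indicator_nonneg])
next
  have S_super: "supermartingale_on M F (TTbar T) S" using S unfolding exercise_majorant_def by blast
  have "adapted_on F (TTbar T) (\<lambda>t \<omega>. min (S t \<omega>) (Z t \<omega>))"
    unfolding adapted_on_def
  proof
    fix t assume "t \<in> TTbar T"
    with S_super Z_super have [measurable]: "S t \<in> borel_measurable (F t)" "Z t \<in> borel_measurable (F t)"
      by (simp_all add: supermartingale_on_def adapted_on_def)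
    show "(\<lambda>\<omega>. min (S t \<omega>) (Z t \<omega>)) \<in> borel_measurable (F t)" by measurable
  qed
  then show "supermartingale_on M F (TTbar T) (\<lambda>t \<omega>. min (S t \<omega>) (Z t \<omega>))"
    by (rule supermartingale_on_min[OF filtration S_super Z_super]) simp
next
  fix t assume t: "t \<in> TT T"
  then have "t \<noteq> \<infinity>" "t \<in> TTbar T" using TT_subset_TTbar by (auto simp: TT_def)
  have "AE \<omega> in M. \<omega> \<in> Dset M \<sigma> t \<and> V t \<omega> = G t \<omega> \<longrightarrow> S t \<omega> = 1"
    using S t unfolding exercise_majorant_def by blast
  moreover have "AE \<omega> in M. exercise_indicator M \<sigma> V G t \<omega> \<le> Z t \<omega>"
    using Z_ge \<open>t \<in> TTbar T\<close> by blast
  ultimately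
  show "AE \<omega> in M. \<omega> \<in> Dset M \<sigma> t \<and> V t \<omega> = G t \<omega> \<longrightarrow> min (S t \<omega>) (Z t \<omega>) = 1"
    by eventually_elim (auto simp: exercise_indicator_finite[OF \<open>t \<noteq> \<infinity>\<close>] min_def)
next
  assume T: "T = \<infinity>"
  then have "AE \<omega> in M. S \<infinity> \<omega> = indicator (Dset M \<sigma> \<infinity>) \<omega>"
    using S unfolding exercise_majorant_def by blast
  moreover have "AE \<omega> in M. exercise_indicator M \<sigma> V G \<infinity> \<omega> \<le> Z \<infinity> \<omega>"
    using Z_ge T by (simp add: TTbar_def)
  ultimately show "AE \<omega> in M. min (S \<infinity> \<omega>) (Z \<infinity> \<omega>) = indicator (Dset M \<sigma> \<infinity>) \<omega>"
    by eventually_elim (simp add: exercise_indicator_infinity min_absorb1)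
qed

lemma snell_exercise_iff:
  "snell_envelope_on M F (TTbar T) (exercise_indicator M \<sigma> V G) S \<longleftrightarrow>
     exercise_majorant M F T \<sigma> V G S \<and>
     (\<forall>Z. exercise_majorant M F T \<sigma> V G Z \<longrightarrow> (\<forall>t\<in>TTbar T. AE \<omega> in M. S t \<omega> \<le> Z t \<omega>))"
proof (intro iffI conjI allI impI)
  assume snell: "snell_envelope_on M F (TTbar T) (exercise_indicator M \<sigma> V G) S"
  then have "\<forall>t\<in>TTbar T. AE \<omega> in M. exercise_indicator M \<sigma> V G t \<omega> \<le> S t \<omega>"
    and "supermartingale_on M F (TTbar T) S"
    by (simp_all add: snell_envelope_on_def)
  with snell_exercise_le_Dset[OF snell] show "exercise_majorant M F T \<sigma> V G S"
    by (intro exercise_majorant_if_between) simp_all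
  fix Z assume Z: "exercise_majorant M F T \<sigma> V G Z"
  then have "supermartingale_on M F (TTbar T) Z" by (simp add: exercise_majorant_def)
  with snell exercise_indicator_le_if_majorant[OF Z]
  show "\<forall>t\<in>TTbar T. AE \<omega> in M. S t \<omega> \<le> Z t \<omega>"
    unfolding snell_envelope_on_def by blast
next
  assume "exercise_majorant M F T \<sigma> V G S \<and>
     (\<forall>Z. exercise_majorant M F T \<sigma> V G Z \<longrightarrow> (\<forall>t\<in>TTbar T. AE \<omega> in M. S t \<omega> \<le> Z t \<omega>))"
  then have S: "exercise_majorant M F T \<sigma> V G S"
    and least: "\<And>Z. exercise_majorant M F T \<sigma> V G Z \<Longrightarrow> \<forall>t\<in>TTbar T. AE \<omega> in M. S t \<omega> \<le> Z t \<omega>"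
    by blast+
  have "\<forall>t\<in>TTbar T. AE \<omega> in M. S t \<omega> \<le> Z t \<omega>"
    if "supermartingale_on M F (TTbar T) Z"
      and "\<forall>t\<in>TTbar T. AE \<omega> in M. exercise_indicator M \<sigma> V G t \<omega> \<le> Z t \<omega>" for Z
  proof -
    have "exercise_majorant M F T \<sigma> V G (\<lambda>t \<omega>. min (S t \<omega>) (Z t \<omega>))"
      using S that by (rule exercise_majorant_min)
    then have "\<forall>t\<in>TTbar T. AE \<omega> in M. S t \<omega> \<le> min (S t \<omega>) (Z t \<omega>)"
      by (rule least)
    then show ?thesis by simp
  qed
  moreover have "supermartingale_on M F (TTbar T) S" using S by (simp add: exercise_majorant_def)
  ultimately show "snell_envelope_on M F (TTbar T) (exercise_indicator M \<sigma> V G) S"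
    using exercise_indicator_le_if_majorant[OF S] unfolding snell_envelope_on_def by blast
qed

end

theorem lemma6p3:
  fixes M :: "'a measure" and F :: "enat \<Rightarrow> 'a measure" and T :: enat
    and \<sigma> :: "'a \<Rightarrow> enat" and G V S :: "enat \<Rightarrow> 'a \<Rightarrow> real"
  assumes prob: "prob_space M"
    and filt: "filtration_on M F (TTbar T)"
    and F0: "sets (F 0) = {{}, space M}"
    and sigma_meas: "\<sigma> \<in> measurable M (count_space UNIV)"
    and sigma_stop: "\<forall>t\<in>TTbar T. {\<omega> \<in> space M. \<sigma> \<omega> \<le> t} \<in> sets (F t)"
    and sigma_pos: "AE \<omega> in M. 0 < \<sigma> \<omega>"
    and G_adapted: "adapted_on F (TT T) G"
    and G_inf: "T = \<infinity> \<longrightarrow> (AE \<omega> in M. \<omega> \<in> Dset M \<sigma> \<infinity> \<longrightarrow>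
                   ereal (G \<infinity> \<omega>) = limsup (\<lambda>n. ereal (G (enat n) \<omega>)))"
    and G_int: "(\<integral>\<^sup>+ \<omega>. (SUP t\<in>TTbar T. ennreal (\<bar>G t \<omega>\<bar> * indicator (Dset M \<sigma> t) \<omega>)) \<partial>M) < \<infinity>"
    and V_adapted: "adapted_on F (TT T) V"
    and S_adapted: "adapted_on F (TTbar T) S"
  shows
   "( \<comment> \<open>(i)\<close>
      (\<forall>t\<in>TT T. AE \<omega> in M. (\<omega> \<in> Dset M \<sigma> t \<longrightarrow> 0 < S t \<omega> \<and> S t \<omega> \<le> 1) \<and>
                           (\<omega> \<notin> Dset M \<sigma> t \<longrightarrow> S t \<omega> = 0)) \<and>
      (\<forall>t\<in>TT T. AE \<omega> in M. eff_horizon M F \<sigma> T \<omega> \<le> t \<and> \<omega> \<in> Dset M \<sigma> t \<longrightarrow> V t \<omega> = G t \<omega>) \<and>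
      \<comment> \<open>(ii)\<close>
      (\<forall>t\<in>TT T. AE \<omega> in M. \<omega> \<in> Dset M \<sigma> t \<longrightarrow> G t \<omega> \<le> V t \<omega>) \<and>
      supermartingale_on M F (TT T) (stopped (eff_horizon M F \<sigma> T) (kprod M \<sigma> S V)) \<and>
      (\<forall>W. adapted_on F (TT T) W \<and>
           (\<forall>t\<in>TT T. AE \<omega> in M. \<omega> \<in> Dset M \<sigma> t \<longrightarrow> G t \<omega> \<le> W t \<omega>) \<and>
           supermartingale_on M F (TT T) (stopped (eff_horizon M F \<sigma> T) (kprod M \<sigma> S W))
         \<longrightarrow> (\<forall>t\<in>TT T. AE \<omega> in M. \<omega> \<in> Dset M \<sigma> t \<longrightarrow> V t \<omega> \<le> W t \<omega>)) \<and>
      \<comment> \<open>(iii)\<close>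
      (\<forall>t\<in>TTbar T. AE \<omega> in M. 0 \<le> S t \<omega>) \<and>
      supermartingale_on M F (TTbar T) S \<and>
      (\<forall>t\<in>TT T. AE \<omega> in M. \<omega> \<in> Dset M \<sigma> t \<and> V t \<omega> = G t \<omega> \<longrightarrow> S t \<omega> = 1) \<and>
      (T = \<infinity> \<longrightarrow> (AE \<omega> in M. S \<infinity> \<omega> = indicator (Dset M \<sigma> \<infinity>) \<omega>)) \<and>
      (\<forall>Z. (\<forall>t\<in>TTbar T. AE \<omega> in M. 0 \<le> Z t \<omega>) \<and>
           supermartingale_on M F (TTbar T) Z \<and>
           (\<forall>t\<in>TT T. AE \<omega> in M. \<omega> \<in> Dset M \<sigma> t \<and> V t \<omega> = G t \<omega> \<longrightarrow> Z t \<omega> = 1) \<and>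
           (T = \<infinity> \<longrightarrow> (AE \<omega> in M. Z \<infinity> \<omega> = indicator (Dset M \<sigma> \<infinity>) \<omega>))
         \<longrightarrow> (\<forall>t\<in>TTbar T. AE \<omega> in M. S t \<omega> \<le> Z t \<omega>)))
    \<longleftrightarrow>
    ( \<comment> \<open>(i')\<close>
      (\<forall>t\<in>TT T. AE \<omega> in M. \<omega> \<in> Dset M \<sigma> t \<longrightarrow> 0 < S t \<omega>) \<and>
      (\<forall>t\<in>TT T. AE \<omega> in M. eff_horizon M F \<sigma> T \<omega> \<le> t \<and> \<omega> \<in> Dset M \<sigma> t \<longrightarrow> V t \<omega> = G t \<omega>) \<and>
      \<comment> \<open>(ii')\<close>
      snell_envelope_on M F (TT T)
        (stopped (eff_horizon M F \<sigma> T) (kprod M \<sigma> S G))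
        (stopped (eff_horizon M F \<sigma> T) (kprod M \<sigma> S V)) \<and>
      \<comment> \<open>(iii')\<close>
      snell_envelope_on M F (TTbar T)
        (\<lambda>t \<omega>. indicator {\<omega> \<in> Dset M \<sigma> t. t \<noteq> \<infinity> \<and> V t \<omega> = G t \<omega>} \<omega>
              + indicator {\<omega> \<in> space M. t = \<infinity> \<and> \<sigma> \<omega> = \<infinity>} \<omega>)
        S)"
proof -
  interpret stopping_problem M F T \<sigma>
    using prob filt sigma_stop by (simp add: stopping_problem_def stopping_problem_axioms_def)
  note iii_iff = snell_exercise_iff[of V G S,
      unfolded exercise_indicator_def[abs_def] exercise_majorant_def conj_assoc]
  note S_le_D = snell_exercise_le_Dset[of V G S, unfolded exercise_indicator_def[abs_def]]
  note ii_iff = least_weighted_majorant_iff_snell[OF S_adapted G_adapted V_adapted,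
      unfolded least_weighted_majorant_def]
  note i_iff = positive_on_Dset_iff[where S = S and M = M and \<sigma> = \<sigma> and T = T]
  show ?thesis
    unfolding iii_iff[symmetric] using iii_iff S_le_D ii_iff i_iff by blast
qed

end
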